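(* Let $s:\mathbb{R}\to\mathbb{R}$ be continuous and not a polynomial. Let $F:[0,1]^d\to\mathbb{R}$ be of the form $F(\boldsymbol{x})=\sum_{i=1}^N\psi_i(\boldsymbol{a}_i^\top\boldsymbol{x}+b_i)$ with $N\ge1$, $\boldsymbol{a}_i\in\mathbb{R}^d$, $b_i\in\mathbb{R}$ and $\psi_i\in C^1(\mathbb{R})$. Then for every $\epsilon>0$ there exist $M\ge1$, $\boldsymbol{W}\in\mathbb{R}^{M\times d}$, $\boldsymbol{c}\in\mathbb{R}^M$, diagonal matrices $\boldsymbol{U},\boldsymbol{V}\in\mathbb{R}^{M\times M}$ and $\boldsymbol{\beta}\in\mathbb{R}^M$ such that $$\sup_{\boldsymbol{x}\in[0,1]^d}\big\|\nabla F(\boldsymbol{x})-\boldsymbol{W}^\top\boldsymbol{U}\,s\big(\boldsymbol{V}(\boldsymbol{W}\boldsymbol{x}+\boldsymbol{c})+\boldsymbol{\beta}\big)\big\|<\epsilon,$$ where $s$ is applied elementwise. Each such approximator is of the form $\boldsymbol{W}^\top\sigma(\boldsymbol{W}\boldsymbol{x}+\boldsymbol{c})$ with a continuous elementwise activation $\sigma$ and is the gradient of a $C^1$ function on $\mathbb{R}^d$.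
   Context: $C^1(\mathbb{R})$ denotes continuously differentiable functions $\mathbb{R}\to\mathbb{R}$. An elementwise activation $\sigma:\mathbb{R}^M\to\mathbb{R}^M$ has the form $\sigma(\boldsymbol{z})=(\sigma_1(z_1),\dots,\sigma_M(z_M))$ with scalar functions $\sigma_j$. $\|\cdot\|$ is the Euclidean norm. *)

theory Defs
  imports "HOL-Analysis.Analysis" "HOL-Computational_Algebra.Polynomial"
begin

definition is_polynomial_fun :: "(real \<Rightarrow> real) \<Rightarrow> bool" where
  "is_polynomial_fun s \<longleftrightarrow> (\<exists>p :: real poly. \<forall>x. s x = poly p x)"

definition unit_cube :: "(real ^ 'd) set" where
  "unit_cube = {x. \<forall>i. 0 \<le> x $ i \<and> x $ i \<le> 1}"

text \<open>The approximator  W^T U s(V(Wx+c)+beta)  with W having rows w j (j < M),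
  c the vector (c j), U = diag(u j), V = diag(v j), beta = (beta j).\<close>
definition grad_net ::
  "(real \<Rightarrow> real) \<Rightarrow> nat \<Rightarrow> (nat \<Rightarrow> real ^ 'd) \<Rightarrow> (nat \<Rightarrow> real) \<Rightarrow> (nat \<Rightarrow> real)
   \<Rightarrow> (nat \<Rightarrow> real) \<Rightarrow> (nat \<Rightarrow> real) \<Rightarrow> real ^ 'd \<Rightarrow> real ^ 'd" where
  "grad_net s M w c u v \<beta> x =
     (\<Sum>j<M. (u j * s (v j * (w j \<bullet> x + c j) + \<beta> j)) *\<^sub>R w j)"

end

theory Submission
  imports Defs
begin

text \<open>The gradient of a ridge sum is the sum of the vectors psi_i'(a_i . x + b_i) a_i, so it
  suffices to approximate each continuous psi_i' uniformly on a compact interval by a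
  one-dimensional network t |-> sum u s(v t + beta) and to stack these networks into the rows of W.

  For the one-dimensional approximation (Leshno et al.) let S_k be a k-fold antiderivative of s.
  A difference quotient of an antiderivative of an approximable function is a uniform limit of
  Riemann sums, so the k-th forward difference quotient D_h^k S_k is approximable. Its k-th
  derivative is D_h^k s; if this vanished for every h, the polynomials D_h^k S_k of degree < k
  would converge to s as h -> 0, and s would be a polynomial. Differentiating g(v t + b) m times
  in the weight v, again via difference quotients, shows that t^m g^(m)(v t + b) is approximable;
  for g = D_h^k S_k, m = k and v = 0 this is a nonzero multiple of t^k, and the Weierstrass
  theorem concludes.

  Finally W^T U s(V(Wx + c) + beta) is the gradient of sum_j u_j Q_j(w_j . x + c_j), where
  Q_j' = s(v_j t + beta_j).\<close>

definition shallow_net :: "(real \<Rightarrow> real) \<Rightarrow> (real \<times> real \<times> real) list \<Rightarrow> real \<Rightarrow> real" where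
  "shallow_net s ps t = (\<Sum>(u, v, \<beta>)\<leftarrow>ps. u * s (v * t + \<beta>))"

definition net_approximable :: "(real \<Rightarrow> real) \<Rightarrow> (real \<Rightarrow> real) \<Rightarrow> bool" where
  "net_approximable s f \<longleftrightarrow>
     (\<forall>A B e. e > 0 \<longrightarrow> (\<exists>ps. \<forall>t\<in>{A..B}. \<bar>f t - shallow_net s ps t\<bar> < e))"

lemma shallow_net_Nil [simp]: "shallow_net s [] t = 0"
  by (simp add: shallow_net_def)

lemma shallow_net_append [simp]: "shallow_net s (ps @ qs) t = shallow_net s ps t + shallow_net s qs t"
  by (simp add: shallow_net_def)

lemma shallow_net_scale:
  "shallow_net s (map (\<lambda>(u, v, \<beta>). (c * u, v, \<beta>)) ps) t = c * shallow_net s ps t"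
  by (induction ps) (auto simp: shallow_net_def algebra_simps)

lemma shallow_net_affine:
  "shallow_net s (map (\<lambda>(u, v, \<beta>). (u, v * a, v * b + \<beta>)) ps) t = shallow_net s ps (a * t + b)"
  by (induction ps) (auto simp: shallow_net_def algebra_simps)

lemma net_approximable_activation: "net_approximable s s"
  unfolding net_approximable_def
  by (intro allI impI exI[of _ "[(1, 1, 0)]"]) (auto simp: shallow_net_def)

lemma net_approximable_zero: "net_approximable s (\<lambda>t. 0)"
  unfolding net_approximable_def by (intro allI impI exI[of _ "[]"]) auto

lemma net_approximable_add:
  assumes "net_approximable s f" "net_approximable s g"
  shows "net_approximable s (\<lambda>t. f t + g t)"
  unfolding net_approximable_def
proof (intro allI impI)
  fix A B e :: real
  assume "e > 0"
  then obtain ps qs where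
    ps: "\<forall>t\<in>{A..B}. \<bar>f t - shallow_net s ps t\<bar> < e / 2" and
    qs: "\<forall>t\<in>{A..B}. \<bar>g t - shallow_net s qs t\<bar> < e / 2"
    using assms unfolding net_approximable_def by (meson half_gt_zero)
  have "\<bar>f t + g t - shallow_net s (ps @ qs) t\<bar> < e" if "t \<in> {A..B}" for t
  proof -
    have "\<bar>f t - shallow_net s ps t\<bar> < e / 2" "\<bar>g t - shallow_net s qs t\<bar> < e / 2"
      using ps qs that by auto
    then show ?thesis unfolding abs_less_iff by auto
  qed
  then show "\<exists>ps. \<forall>t\<in>{A..B}. \<bar>f t + g t - shallow_net s ps t\<bar> < e"
    by blast
qed

lemma net_approximable_scale:
  assumes "net_approximable s f"
  shows "net_approximable s (\<lambda>t. c * f t)"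
  unfolding net_approximable_def
proof (intro allI impI)
  fix A B e :: real
  assume e: "e > 0"
  then have "e / (\<bar>c\<bar> + 1) > 0" by simp
  then obtain ps where ps: "\<forall>t\<in>{A..B}. \<bar>f t - shallow_net s ps t\<bar> < e / (\<bar>c\<bar> + 1)"
    using assms unfolding net_approximable_def by blast
  have "\<bar>c * f t - shallow_net s (map (\<lambda>(u, v, \<beta>). (c * u, v, \<beta>)) ps) t\<bar> < e"
    if "t \<in> {A..B}" for t
  proof -
    have "\<bar>c * f t - shallow_net s (map (\<lambda>(u, v, \<beta>). (c * u, v, \<beta>)) ps) t\<bar>
        = \<bar>c\<bar> * \<bar>f t - shallow_net s ps t\<bar>"
      by (simp only: shallow_net_scale abs_mult[symmetric] right_diff_distrib)
    also have "\<dots> \<le> \<bar>c\<bar> * (e / (\<bar>c\<bar> + 1))"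
      using ps that by (intro mult_left_mono) (auto intro: less_imp_le)
    also have "\<dots> < e"
      using e by (simp add: field_simps)
    finally show ?thesis .
  qed
  then show "\<exists>ps. \<forall>t\<in>{A..B}. \<bar>c * f t - shallow_net s ps t\<bar> < e"
    by blast
qed

lemma net_approximable_diff:
  assumes "net_approximable s f" "net_approximable s g"
  shows "net_approximable s (\<lambda>t. f t - g t)"
  using net_approximable_add[OF assms(1) net_approximable_scale[OF assms(2), of "-1"]] by simp

lemma net_approximable_sum:
  fixes n :: nat
  assumes "\<And>i. i < n \<Longrightarrow> net_approximable s (f i)"
  shows "net_approximable s (\<lambda>t. \<Sum>i<n. f i t)"
  using assms by (induction n) (simp_all add: net_approximable_zero net_approximable_add)

lemma net_approximable_closure:
  assumes "\<And>A B e. e > 0 \<Longrightarrow> \<exists>g. net_approximable s g \<and> (\<forall>t\<in>{A..B}. \<bar>f t - g t\<bar> \<le> e)"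
  shows "net_approximable s f"
  unfolding net_approximable_def
proof (intro allI impI)
  fix A B e :: real
  assume "e > 0"
  then obtain g where g: "net_approximable s g" "\<forall>t\<in>{A..B}. \<bar>f t - g t\<bar> \<le> e / 2"
    using assms[of "e / 2" A B] by auto
  then obtain ps where ps: "\<forall>t\<in>{A..B}. \<bar>g t - shallow_net s ps t\<bar> < e / 2"
    using \<open>e > 0\<close> unfolding net_approximable_def by (meson half_gt_zero)
  have "\<bar>f t - shallow_net s ps t\<bar> < e" if "t \<in> {A..B}" for t
  proof -
    have "\<bar>f t - g t\<bar> \<le> e / 2" "\<bar>g t - shallow_net s ps t\<bar> < e / 2"
      using g(2) ps that by auto
    then show ?thesis unfolding abs_le_iff abs_less_iff by auto
  qed
  then show "\<exists>ps. \<forall>t\<in>{A..B}. \<bar>f t - shallow_net s ps t\<bar> < e" by blast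
qed

lemma net_approximable_affine:
  assumes "net_approximable s f"
  shows "net_approximable s (\<lambda>t. f (a * t + b))"
  unfolding net_approximable_def
proof (intro allI impI)
  fix A B e :: real
  assume "e > 0"
  define R where "R = \<bar>a\<bar> * (\<bar>A\<bar> + \<bar>B\<bar>) + \<bar>b\<bar>"
  obtain ps where ps: "\<forall>t\<in>{-R..R}. \<bar>f t - shallow_net s ps t\<bar> < e"
    using assms \<open>e > 0\<close> unfolding net_approximable_def by blast
  have "a * t + b \<in> {-R..R}" if "t \<in> {A..B}" for t
  proof -
    have "\<bar>a\<bar> * \<bar>t\<bar> \<le> \<bar>a\<bar> * (\<bar>A\<bar> + \<bar>B\<bar>)"
      using that by (intro mult_left_mono) auto
    then have "\<bar>a * t + b\<bar> \<le> R"
      unfolding R_def using abs_triangle_ineq[of "a * t" b] by (simp add: abs_mult)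
    then show ?thesis by (simp add: abs_le_iff)
  qed
  with ps have "\<forall>t\<in>{A..B}. \<bar>f (a * t + b) - shallow_net s ps (a * t + b)\<bar> < e"
    by blast
  then show "\<exists>ps. \<forall>t\<in>{A..B}. \<bar>f (a * t + b) - shallow_net s ps t\<bar> < e"
    by (intro exI[of _ "map (\<lambda>(u, v, \<beta>). (u, v * a, v * b + \<beta>)) ps"])
      (simp add: shallow_net_affine)
qed

lemma net_approximable_shift:
  assumes "net_approximable s f"
  shows "net_approximable s (\<lambda>t. f (t + b))"
  using net_approximable_affine[OF assms, of 1 b] by simp

lemma antiderivative_increment_bound:
  fixes G f :: "real \<Rightarrow> real"
  assumes G: "\<And>x. (G has_real_derivative f x) (at x)"
    and f: "\<And>z. z \<in> closed_segment p q \<Longrightarrow> \<bar>f z - f p\<bar> \<le> e"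
  shows "\<bar>G q - G p - (q - p) * f p\<bar> \<le> \<bar>q - p\<bar> * e"
proof -
  have "(G has_vector_derivative f z) (at z within closed_segment p q)" for z
    using G by (simp add: has_real_derivative_iff_has_vector_derivative has_vector_derivative_at_within)
  moreover have "norm (f z - f p) \<le> e" if "z \<in> closed_segment p q" for z
    using f that by simp
  ultimately have "norm (G q - G p - (q - p) *\<^sub>R f p) \<le> norm (q - p) * e"
    by (intro vector_differentiable_bound_linearization[OF _ order_refl]) auto
  then show ?thesis by simp
qed

lemma antiderivative_riemann_sum_error:
  fixes G f :: "real \<Rightarrow> real" and n :: nat
  assumes G: "\<And>x. (G has_real_derivative f x) (at x)" and n: "n > 0" and h: "h > 0"
    and osc: "\<And>x y. x \<in> {t..t + h} \<Longrightarrow> y \<in> {t..t + h} \<Longrightarrow> \<bar>y - x\<bar> \<le> h / n \<Longrightarrow>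
      \<bar>f y - f x\<bar> \<le> e"
  shows "\<bar>G (t + h) - G t - h * (\<Sum>i<n. (1 / n) * f (t + real i * h / n))\<bar> \<le> h * e"
proof -
  define p where "p i = t + real i * h / n" for i
  have step: "\<bar>G (p (Suc i)) - G (p i) - (h / n) * f (p i)\<bar> \<le> (h / n) * e" if i: "i < n" for i
  proof -
    have width: "p (Suc i) - p i = h / n"
      using n by (simp add: p_def field_simps)
    moreover have "h / n > 0"
      using h n by simp
    moreover have "h * (1 + real i) \<le> h * real n"
      using i h by (intro mult_left_mono) auto
    then have "t \<le> p i" "p (Suc i) \<le> t + h"
      using h n by (auto simp: p_def field_simps)
    ultimately have "\<bar>f z - f (p i)\<bar> \<le> e" if "z \<in> closed_segment (p i) (p (Suc i))" for z
      using that osc[of "p i" z] by (auto simp: closed_segment_eq_real_ivl)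
    from antiderivative_increment_bound[where q="p (Suc i)", OF G this] show ?thesis
      using width h n by (simp add: abs_of_pos)
  qed
  have "G (t + h) - G t = (\<Sum>i<n. G (p (Suc i)) - G (p i))"
    using sum_lessThan_telescope[of "\<lambda>i. G (p i)" n] n by (simp add: p_def)
  then have "G (t + h) - G t - h * (\<Sum>i<n. (1 / n) * f (t + real i * h / n))
      = (\<Sum>i<n. G (p (Suc i)) - G (p i) - (h / n) * f (p i))"
    by (simp add: p_def sum_subtractf sum_distrib_left)
  also have "\<bar>\<dots>\<bar> \<le> (\<Sum>i<n. (h / n) * e)"
    by (rule order_trans[OF sum_abs sum_mono]) (use step in auto)
  also have "\<dots> = h * e"
    using n by simp
  finally show ?thesis .
qed

lemma net_approximable_diff_quotient:
  assumes approx: "net_approximable s f" and cont: "continuous_on UNIV f"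
    and G: "\<And>x. (G has_real_derivative f x) (at x)" and h: "h > 0"
  shows "net_approximable s (\<lambda>t. (G (t + h) - G t) / h)"
proof (rule net_approximable_closure)
  fix A B e :: real
  assume e: "e > 0"
  have "uniformly_continuous_on {A..B + h} f"
    by (rule compact_uniformly_continuous) (use cont in \<open>auto intro: continuous_on_subset\<close>)
  then obtain d where d: "d > 0"
    "\<And>x y. x \<in> {A..B + h} \<Longrightarrow> y \<in> {A..B + h} \<Longrightarrow> dist y x < d \<Longrightarrow> dist (f y) (f x) < e"
    unfolding uniformly_continuous_on_def using e by metis
  obtain n :: nat where hdn: "h / d < n"
    using reals_Archimedean2 by blast
  have n: "n > 0" "h / n < d"
  proof -
    show "n > 0"
      using hdn h d by (metis divide_pos_pos of_nat_0 not_gr_zero not_less_iff_gr_or_eq)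
    then show "h / n < d"
      using hdn d by (simp add: field_simps)
  qed
  define R where "R t = (\<Sum>i<n. (1 / n) * f (t + real i * h / n))" for t
  have "net_approximable s R"
    unfolding R_def by (intro net_approximable_sum net_approximable_scale net_approximable_shift approx)
  moreover have "\<bar>(G (t + h) - G t) / h - R t\<bar> \<le> e" if "t \<in> {A..B}" for t
  proof -
    have "\<bar>f y - f x\<bar> \<le> e" if "x \<in> {t..t + h}" "y \<in> {t..t + h}" "\<bar>y - x\<bar> \<le> h / n" for x y
      using d(2)[of x y] that \<open>t \<in> {A..B}\<close> n(2) by (auto simp: dist_real_def)
    from antiderivative_riemann_sum_error[OF G n(1) h this]
    have "\<bar>G (t + h) - G t - h * R t\<bar> \<le> h * e"
      by (simp add: R_def)
    moreover have "(G (t + h) - G t) / h - R t = (G (t + h) - G t - h * R t) / h"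
      using h by (simp add: field_simps)
    ultimately show ?thesis
      using h by (simp add: divide_le_eq abs_divide mult.commute)
  qed
  ultimately show "\<exists>g. net_approximable s g \<and> (\<forall>t\<in>{A..B}. \<bar>(G (t + h) - G t) / h - g t\<bar> \<le> e)"
    by blast
qed

fun fwd_diff :: "real \<Rightarrow> nat \<Rightarrow> (real \<Rightarrow> real) \<Rightarrow> real \<Rightarrow> real" where
  "fwd_diff h 0 F = F"
| "fwd_diff h (Suc k) F = (\<lambda>t. (fwd_diff h k F (t + h) - fwd_diff h k F t) / h)"

lemma has_real_derivative_fwd_diff:
  assumes "\<And>x. (F has_real_derivative F' x) (at x)"
  shows "(fwd_diff h k F has_real_derivative fwd_diff h k F' x) (at x)"
proof (induction k arbitrary: x)
  case 0
  then show ?case using assms by simp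
next
  case (Suc k)
  have "((\<lambda>t. t + h) has_real_derivative 1) (at x)"
    by (auto intro!: derivative_eq_intros)
  from DERIV_chain2[OF Suc.IH[of "x + h"] this]
  have "((\<lambda>t. fwd_diff h k F (t + h)) has_real_derivative fwd_diff h k F' (x + h)) (at x)"
    by simp
  from DERIV_cdivide[OF DERIV_diff[OF this Suc.IH], of h] show ?case
    by simp
qed

lemma continuous_on_fwd_diff:
  assumes "continuous_on UNIV F"
  shows "continuous_on UNIV (fwd_diff h k F)"
proof (induction k)
  case 0
  then show ?case using assms by simp
next
  case (Suc k)
  have "continuous_on UNIV (\<lambda>t. fwd_diff h k F (t + h))"
    by (rule continuous_on_compose2[OF Suc]) (auto intro!: continuous_intros)
  with Suc show ?case
    by (auto simp: divide_inverse intro!: continuous_intros)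
qed

lemma antiderivative_exists:
  fixes f :: "real \<Rightarrow> real"
  assumes "continuous_on UNIV f"
  shows "\<exists>F. \<forall>x. (F has_real_derivative f x) (at x)"
proof -
  have "\<exists>F. \<forall>x :: real. (-\<infinity>::ereal) < x \<longrightarrow> x < \<infinity> \<longrightarrow> (F has_vector_derivative f x) (at x)"
    by (rule einterval_antiderivative) (use assms in \<open>auto simp: continuous_on_eq_continuous_at\<close>)
  then show ?thesis
    by (auto simp: has_real_derivative_iff_has_vector_derivative)
qed

lemma antiderivative_chain_exists:
  assumes "continuous_on UNIV s"
  shows "\<exists>S. S 0 = s \<and> (\<forall>j x. (S (Suc j) has_real_derivative S j x) (at x))"
proof -
  define S where "S = rec_nat s (\<lambda>j F. SOME G. \<forall>x. (G has_real_derivative F x) (at x))"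
  have "continuous_on UNIV (S j) \<and> (\<forall>x. (S (Suc j) has_real_derivative S j x) (at x))" for j
  proof (induction j)
    case 0
    show ?case
      using someI_ex[OF antiderivative_exists[OF assms]] assms by (simp add: S_def)
  next
    case (Suc j)
    then have "continuous_on UNIV (S (Suc j))"
      by (intro continuous_at_imp_continuous_on) (use DERIV_continuous in blast)
    with someI_ex[OF antiderivative_exists[OF this]] show ?case
      by (simp add: S_def)
  qed
  then show ?thesis
    by (intro exI[of _ S]) (simp add: S_def)
qed

lemma continuous_on_antiderivative_chain:
  assumes "continuous_on UNIV (S 0)"
    and "\<And>j x. (S (Suc j) has_real_derivative S j x) (at x)"
  shows "continuous_on UNIV (S j)"
proof (cases j)
  case (Suc i)
  show ?thesis
    unfolding Suc by (rule continuous_at_imp_continuous_on) (use assms(2) DERIV_continuous in blast)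
qed (use assms(1) in simp)

lemma has_real_derivative_fwd_diff_chain:
  assumes "\<And>j x. (S (Suc j) has_real_derivative S j x) (at x)" and "m < k"
  shows "(fwd_diff h k (S (k - m)) has_real_derivative fwd_diff h k (S (k - Suc m)) x) (at x)"
proof -
  have "k - m = Suc (k - Suc m)"
    using \<open>m < k\<close> by simp
  then show ?thesis
    using has_real_derivative_fwd_diff[OF assms(1)] by simp
qed

lemma fwd_diff_chain_mean_value:
  assumes S: "\<And>j x. (S (Suc j) has_real_derivative S j x) (at x)" and h: "h > 0"
  shows "\<exists>\<xi>. t \<le> \<xi> \<and> \<xi> \<le> t + k * h \<and> fwd_diff h k (S k) t = S 0 \<xi>"
proof (induction k arbitrary: t)
  case 0
  then show ?case by auto
next
  case (Suc k)
  obtain z where z: "t < z" "z < t + h"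
    "fwd_diff h k (S (Suc k)) (t + h) - fwd_diff h k (S (Suc k)) t = h * fwd_diff h k (S k) z"
    using MVT2[of t "t + h" "fwd_diff h k (S (Suc k))" "fwd_diff h k (S k)"]
      has_real_derivative_fwd_diff[OF S] h by auto
  obtain \<xi> where "z \<le> \<xi>" "\<xi> \<le> z + k * h" "fwd_diff h k (S k) z = S 0 \<xi>"
    using Suc.IH by blast
  with z h show ?case
    by (intro exI[of _ \<xi>]) (auto simp: algebra_simps)
qed

lemma net_approximable_fwd_diff_chain:
  assumes "S 0 = s" "continuous_on UNIV s"
    and S: "\<And>j x. (S (Suc j) has_real_derivative S j x) (at x)" and "h > 0"
  shows "net_approximable s (fwd_diff h k (S k))"
proof (induction k)
  case 0
  then show ?case using assms(1) net_approximable_activation by simp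
next
  case (Suc k)
  have "continuous_on UNIV (fwd_diff h k (S k))"
    using assms(1,2) continuous_on_antiderivative_chain[where S=S, OF _ S]
    by (intro continuous_on_fwd_diff) simp
  from net_approximable_diff_quotient[OF Suc this has_real_derivative_fwd_diff[OF S] \<open>h > 0\<close>]
  show ?case by simp
qed

lemma fwd_diff_chain_tendsto:
  assumes "isCont (S 0) x" and S: "\<And>j x. (S (Suc j) has_real_derivative S j x) (at x)"
    and h: "\<And>n. h n > 0" "h \<longlonglongrightarrow> 0"
  shows "(\<lambda>n. fwd_diff (h n) k (S k) x) \<longlonglongrightarrow> S 0 x"
proof -
  obtain \<xi> where \<xi>: "\<And>n. x \<le> \<xi> n" "\<And>n. \<xi> n \<le> x + k * h n"
    "\<And>n. fwd_diff (h n) k (S k) x = S 0 (\<xi> n)"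
    using fwd_diff_chain_mean_value[where S=S, OF S h(1)] by metis
  have "(\<lambda>n. x + k * h n) \<longlonglongrightarrow> x"
    using tendsto_add[OF tendsto_const tendsto_mult_right_zero[OF h(2)]] by simp
  with \<xi>(1,2) have "\<xi> \<longlonglongrightarrow> x"
    by (intro tendsto_sandwich[of "\<lambda>_. x" \<xi> sequentially "\<lambda>n. x + k * h n"]) auto
  from isCont_tendsto_compose[OF assms(1) this] show ?thesis
    by (simp add: \<xi>(3))
qed

definition lagrange_basis :: "nat \<Rightarrow> nat \<Rightarrow> real poly" where
  "lagrange_basis n i =
     smult (1 / (\<Prod>j\<in>{..n} - {i}. real i - real j)) (\<Prod>j\<in>{..n} - {i}. [:- real j, 1:])"

lemma poly_lagrange_basis:
  assumes "i \<le> n" "l \<le> n"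
  shows "poly (lagrange_basis n i) (real l) = (if l = i then 1 else 0)"
proof (cases "l = i")
  case True
  have "(\<Prod>j\<in>{..n} - {i}. real i - real j) \<noteq> 0"
    by (auto simp: prod_zero_iff)
  then show ?thesis
    using True by (simp add: lagrange_basis_def poly_prod)
next
  case False
  have "(\<Prod>j\<in>{..n} - {i}. poly [:- real j, 1:] (real l)) = 0"
    using False assms by (intro prod_zero) auto
  then show ?thesis
    using False by (simp add: lagrange_basis_def poly_prod)
qed

lemma degree_lagrange_basis:
  assumes "i \<le> n"
  shows "degree (lagrange_basis n i) \<le> n"
proof -
  have "degree (\<Prod>j\<in>{..n} - {i}. [:- real j, 1:])
      \<le> sum (degree \<circ> (\<lambda>j. [:- real j, 1:])) ({..n} - {i})"
    by (rule degree_prod_sum_le) auto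
  also have "\<dots> = n"
    using assms by simp
  finally show ?thesis
    unfolding lagrange_basis_def using degree_smult_le order_trans by blast
qed

lemma lagrange_interpolation:
  assumes "degree p \<le> n"
  shows "poly p x = (\<Sum>i\<le>n. poly p (real i) * poly (lagrange_basis n i) x)"
proof -
  define q where "q = p - (\<Sum>i\<le>n. smult (poly p (real i)) (lagrange_basis n i))"
  have "degree q \<le> n"
    unfolding q_def using assms
    by (intro degree_diff_le degree_sum_le order_trans[OF degree_smult_le] degree_lagrange_basis) auto
  have "poly q (real l) = 0" if "l \<le> n" for l
  proof -
    have "(\<Sum>i\<le>n. poly p (real i) * poly (lagrange_basis n i) (real l))
        = (\<Sum>i\<le>n. if i = l then poly p (real l) else 0)"
      using that by (intro sum.cong) (auto simp: poly_lagrange_basis)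
    then show ?thesis
      using that by (simp add: q_def poly_sum)
  qed
  have "q = 0"
  proof (rule ccontr)
    assume "q \<noteq> 0"
    have "Suc n = card (real ` {..n})"
      by (simp add: card_image)
    also have "\<dots> \<le> card {x. poly q x = 0}"
      using \<open>\<And>l. l \<le> n \<Longrightarrow> poly q (real l) = 0\<close>
      by (intro card_mono poly_roots_finite \<open>q \<noteq> 0\<close>) auto
    also have "\<dots> \<le> degree q"
      by (rule card_poly_roots_bound[OF \<open>q \<noteq> 0\<close>])
    finally show False
      using \<open>degree q \<le> n\<close> by simp
  qed
  then have "p = (\<Sum>i\<le>n. smult (poly p (real i)) (lagrange_basis n i))"
    by (simp add: q_def)
  from arg_cong[OF this, of "\<lambda>p. poly p x"] show ?thesis
    by (simp add: poly_sum)
qed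

lemma is_polynomial_fun_limit:
  fixes c :: "nat \<Rightarrow> nat \<Rightarrow> real"
  assumes f: "\<And>n x. f n x = (\<Sum>m<k. c n m * x ^ m)"
    and lim: "\<And>x. (\<lambda>n. f n x) \<longlonglongrightarrow> s x"
  shows "is_polynomial_fun s"
proof -
  define P where "P n = (\<Sum>m<k. monom (c n m) m)" for n
  have poly_P: "poly (P n) x = f n x" for n x
    by (simp add: P_def f poly_sum poly_monom)
  have "degree (P n) \<le> k" for n
    unfolding P_def by (rule degree_sum_le) (auto intro: order_trans[OF degree_monom_le])
  from lagrange_interpolation[OF this] have interp:
    "f n x = (\<Sum>i\<le>k. f n (real i) * poly (lagrange_basis k i) x)" for n x
    unfolding poly_P .
  have "s x = poly (\<Sum>i\<le>k. smult (s (real i)) (lagrange_basis k i)) x" for x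
  proof -
    have "(\<lambda>n. f n x) \<longlonglongrightarrow> (\<Sum>i\<le>k. s (real i) * poly (lagrange_basis k i) x)"
      by (subst interp) (intro tendsto_sum tendsto_mult_right lim)
    with lim[of x] have "s x = (\<Sum>i\<le>k. s (real i) * poly (lagrange_basis k i) x)"
      by (rule LIMSEQ_unique)
    then show ?thesis
      by (simp add: poly_sum)
  qed
  then show ?thesis
    unfolding is_polynomial_fun_def by blast
qed

lemma taylor_of_vanishing_higher_deriv:
  fixes g :: "nat \<Rightarrow> real \<Rightarrow> real"
  assumes "\<And>m x. m < k \<Longrightarrow> (g m has_real_derivative g (Suc m) x) (at x)"
    and "\<And>x. g k x = 0"
  shows "g 0 x = (\<Sum>m<k. g m 0 / fact m * x ^ m)"
proof -
  define g' where "g' m = (if m \<le> k then g m else (\<lambda>_. 0))" for m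
  have gk: "g k = (\<lambda>_. 0)"
    using assms(2) by auto
  have "(g' m has_real_derivative g' (Suc m) x) (at x)" for m x
    using assms(1) by (cases m k rule: linorder_cases) (auto simp: g'_def gk)
  with Maclaurin_all_le[of g' "g 0" x k] obtain t
    where "g 0 x = (\<Sum>m<k. g' m 0 / fact m * x ^ m) + g' k t / fact k * x ^ k"
    by (auto simp: g'_def)
  then show ?thesis
    using assms(2) by (simp add: g'_def)
qed

lemma nonpolynomial_fwd_diff_nonzero:
  assumes "S 0 = s" "continuous_on UNIV s"
    and S: "\<And>j x. (S (Suc j) has_real_derivative S j x) (at x)"
    and "\<not> is_polynomial_fun s"
  shows "\<exists>h>0. \<exists>b. fwd_diff h k s b \<noteq> 0"
proof (rule ccontr)
  assume "\<not> ?thesis"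
  then have vanish: "fwd_diff h k (S 0) x = 0" if "h > 0" for h x
    using that assms(1) by auto
  define h where "h n = inverse (real (Suc n))" for n
  have h: "\<And>n. h n > 0" "h \<longlonglongrightarrow> 0"
    unfolding h_def[abs_def] using LIMSEQ_inverse_real_of_nat by auto
  \<comment> \<open>fwd_diff (h n) k (S k) has vanishing k-th derivative, hence is a polynomial of degree < k\<close>
  have "fwd_diff (h n) k (S k) x = (\<Sum>m<k. fwd_diff (h n) k (S (k - m)) 0 / fact m * x ^ m)" for n x
    using taylor_of_vanishing_higher_deriv[where g="\<lambda>m. fwd_diff (h n) k (S (k - m))"]
      has_real_derivative_fwd_diff_chain[where S=S, OF S] vanish[OF h(1)] by simp
  moreover have "(\<lambda>n. fwd_diff (h n) k (S k) x) \<longlonglongrightarrow> s x" for x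
    using fwd_diff_chain_tendsto[where S=S, OF _ S h] assms(1,2)
    by (simp add: continuous_on_eq_continuous_at)
  ultimately have "is_polynomial_fun s"
    by (rule is_polynomial_fun_limit)
  with assms(4) show False ..
qed

lemma power_weight_diff_quotient_error:
  assumes G: "\<And>x. (G has_real_derivative f x) (at x)" and "\<eta> > 0"
    and "\<And>z. z \<in> closed_segment p (p + \<eta> * t) \<Longrightarrow> \<bar>f z - f p\<bar> \<le> e"
  shows "\<bar>t ^ Suc m * f p - (1 / \<eta>) * (t ^ m * G (p + \<eta> * t) - t ^ m * G p)\<bar> \<le> \<bar>t\<bar> ^ Suc m * e"
proof -
  from antiderivative_increment_bound[where q="p + \<eta> * t", OF G assms(3)]
  have incr: "\<bar>G (p + \<eta> * t) - G p - \<eta> * t * f p\<bar> \<le> \<eta> * \<bar>t\<bar> * e"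
    using \<open>\<eta> > 0\<close> by (simp add: abs_mult)
  have "t ^ Suc m * f p - (1 / \<eta>) * (t ^ m * G (p + \<eta> * t) - t ^ m * G p)
      = - (t ^ m / \<eta>) * (G (p + \<eta> * t) - G p - \<eta> * t * f p)"
    using \<open>\<eta> > 0\<close> by (simp add: field_simps)
  also have "\<bar>\<dots>\<bar> = (\<bar>t\<bar> ^ m / \<eta>) * \<bar>G (p + \<eta> * t) - G p - \<eta> * t * f p\<bar>"
    using \<open>\<eta> > 0\<close> by (simp add: abs_mult power_abs)
  also have "\<dots> \<le> (\<bar>t\<bar> ^ m / \<eta>) * (\<eta> * \<bar>t\<bar> * e)"
    using incr \<open>\<eta> > 0\<close> by (intro mult_left_mono) auto
  also have "\<dots> = \<bar>t\<bar> ^ Suc m * e"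
    using \<open>\<eta> > 0\<close> by simp
  finally show ?thesis .
qed

lemma net_approximable_weight_derivative:
  assumes approx: "\<And>v. net_approximable s (\<lambda>t. t ^ m * g (v * t + b))"
    and g: "\<And>x. (g has_real_derivative g' x) (at x)" and cont: "continuous_on UNIV g'"
  shows "net_approximable s (\<lambda>t. t ^ Suc m * g' (v * t + b))"
proof (rule net_approximable_closure)
  \<comment> \<open>t ^ Suc m * g' (v * t + b) is the derivative in v of t ^ m * g (v * t + b), approximated by
    a difference quotient in v\<close>
  fix A B e :: real
  assume e: "e > 0"
  define C where "C = \<bar>A\<bar> + \<bar>B\<bar>"
  define R where "R = (\<bar>v\<bar> + 1) * C + \<bar>b\<bar>"
  define e' where "e' = e / (C ^ Suc m + 1)"
  have C: "C \<ge> 0"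
    by (simp add: C_def)
  then have e': "e' > 0" "C ^ Suc m * e' \<le> e"
    using e by (simp_all add: e'_def field_simps add_pos_nonneg)
  have "uniformly_continuous_on (cball 0 R) g'"
    using cont by (intro compact_uniformly_continuous) (auto intro: continuous_on_subset)
  then obtain d where d: "d > 0"
    "\<And>x y. x \<in> cball 0 R \<Longrightarrow> y \<in> cball 0 R \<Longrightarrow> dist y x < d \<Longrightarrow> dist (g' y) (g' x) < e'"
    unfolding uniformly_continuous_on_def using e'(1) by metis
  define \<eta> where "\<eta> = min 1 (d / (C + 1))"
  have \<eta>: "\<eta> > 0" "\<eta> \<le> 1" "\<eta> * C < d"
  proof -
    show "\<eta> > 0" "\<eta> \<le> 1"
      using d C by (auto simp: \<eta>_def)
    have "\<eta> * C \<le> d / (C + 1) * C"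
      using C by (intro mult_right_mono) (auto simp: \<eta>_def)
    also have "\<dots> < d"
      using d C by (simp add: field_simps)
    finally show "\<eta> * C < d" .
  qed
  define q where "q t = (1 / \<eta>) * (t ^ m * g ((v + \<eta>) * t + b) - t ^ m * g (v * t + b))" for t
  have "net_approximable s q"
    unfolding q_def by (intro net_approximable_scale net_approximable_diff approx)
  moreover have "\<bar>t ^ Suc m * g' (v * t + b) - q t\<bar> \<le> e" if "t \<in> {A..B}" for t
  proof -
    define p where "p = v * t + b"
    have t: "\<bar>t\<bar> \<le> C"
      using that by (auto simp: C_def)
    have "\<bar>g' z - g' p\<bar> \<le> e'" if "z \<in> closed_segment p (p + \<eta> * t)" for z
    proof -
      have zp: "\<bar>z - p\<bar> \<le> \<eta> * \<bar>t\<bar>"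
        using dist_in_closed_segment[OF that] \<eta>(1) by (simp add: dist_real_def abs_mult)
      have "\<eta> * \<bar>t\<bar> \<le> \<eta> * C" "\<eta> * \<bar>t\<bar> \<le> C"
        using t \<eta> mult_mono[of \<eta> 1 "\<bar>t\<bar>" C] by auto
      moreover have "\<bar>p\<bar> \<le> \<bar>v\<bar> * C + \<bar>b\<bar>"
        using t abs_triangle_ineq[of "v * t" b] mult_left_mono[of "\<bar>t\<bar>" C "\<bar>v\<bar>"]
        by (simp add: p_def abs_mult)
      moreover have "\<bar>z\<bar> \<le> \<bar>p\<bar> + \<bar>z - p\<bar>"
        using abs_triangle_ineq[of p "z - p"] by simp
      ultimately have "p \<in> cball 0 R" "z \<in> cball 0 R" "dist z p < d"
        using zp \<eta>(3) C by (auto simp: R_def dist_real_def algebra_simps)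
      from d(2)[OF this] show ?thesis
        by (simp add: dist_real_def)
    qed
    from power_weight_diff_quotient_error[where t=t and m=m and p=p, OF g \<eta>(1) this]
    have "\<bar>t ^ Suc m * g' (v * t + b) - q t\<bar> \<le> \<bar>t\<bar> ^ Suc m * e'"
      by (simp add: q_def p_def algebra_simps)
    also have "\<dots> \<le> C ^ Suc m * e'"
      using t e'(1) by (intro mult_right_mono power_mono) auto
    finally show ?thesis
      using e'(2) by simp
  qed
  ultimately show "\<exists>g. net_approximable s g \<and> (\<forall>t\<in>{A..B}. \<bar>t ^ Suc m * g' (v * t + b) - g t\<bar> \<le> e)"
    by blast
qed

lemma net_approximable_power_times_deriv:
  assumes "net_approximable s (g 0)"
    and g: "\<And>m x. m < k \<Longrightarrow> (g m has_real_derivative g (Suc m) x) (at x)"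
    and cont: "\<And>m. m \<le> k \<Longrightarrow> continuous_on UNIV (g m)"
  shows "m \<le> k \<Longrightarrow> net_approximable s (\<lambda>t. t ^ m * g m (v * t + b))"
proof (induction m arbitrary: v)
  case 0
  then show ?case using net_approximable_affine[OF assms(1)] by simp
next
  case (Suc m)
  then show ?case
    by (intro net_approximable_weight_derivative[OF Suc.IH g cont]) auto
qed

lemma net_approximable_power:
  assumes "continuous_on UNIV s" "\<not> is_polynomial_fun s"
  shows "net_approximable s (\<lambda>t. t ^ k)"
proof -
  obtain S where S0: "S 0 = s" and S: "\<And>j x. (S (Suc j) has_real_derivative S j x) (at x)"
    using antiderivative_chain_exists[OF assms(1)] by blast
  obtain h b where h: "h > 0" and nonzero: "fwd_diff h k s b \<noteq> 0"
    using nonpolynomial_fwd_diff_nonzero[OF S0 assms(1) S assms(2)] by blast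
  define g where "g m = fwd_diff h k (S (k - m))" for m
  have "net_approximable s (\<lambda>t. t ^ k * g k (0 * t + b))"
  proof (rule net_approximable_power_times_deriv)
    show "net_approximable s (g 0)"
      unfolding g_def using net_approximable_fwd_diff_chain[OF S0 assms(1) S h] by simp
    show "(g m has_real_derivative g (Suc m) x) (at x)" if "m < k" for m x
      unfolding g_def using has_real_derivative_fwd_diff_chain[where S=S, OF S that] .
    show "continuous_on UNIV (g m)" for m
      unfolding g_def using continuous_on_antiderivative_chain[where S=S, OF _ S] S0 assms(1)
      by (intro continuous_on_fwd_diff) simp
  qed simp
  then have "net_approximable s (\<lambda>t. fwd_diff h k s b * t ^ k)"
    by (simp add: g_def S0 mult.commute)
  from net_approximable_scale[OF this, of "1 / fwd_diff h k s b"] nonzero show ?thesis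
    by simp
qed

lemma net_approximable_continuous:
  assumes "continuous_on UNIV s" "\<not> is_polynomial_fun s" "continuous_on UNIV f"
  shows "net_approximable s f"
proof (rule net_approximable_closure)
  fix A B e :: real
  assume "e > 0"
  then obtain g where g: "polynomial_function g" "\<forall>x\<in>{A..B}. norm (f x - g x) < e"
    using Stone_Weierstrass_polynomial_function[of "{A..B}" f e] assms(3)
    by (auto intro: continuous_on_subset)
  then obtain c n where g_eq: "g = (\<lambda>x. \<Sum>i\<le>n. c i * x ^ i)"
    by (auto simp: real_polynomial_function_eq[symmetric] real_polynomial_function_iff_sum)
  have "net_approximable s (\<lambda>x. \<Sum>i<Suc n. c i * x ^ i)"
    by (intro net_approximable_sum net_approximable_scale net_approximable_power assms(1,2))
  then have "net_approximable s g"
    by (simp add: g_eq lessThan_Suc_atMost)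
  with g(2) show "\<exists>g. net_approximable s g \<and> (\<forall>t\<in>{A..B}. \<bar>f t - g t\<bar> \<le> e)"
    by (auto intro: less_imp_le)
qed

lemma has_derivative_ridge_sum:
  fixes a :: "nat \<Rightarrow> 'a::real_inner"
  assumes "\<And>i t. i < N \<Longrightarrow> (\<psi> i has_real_derivative D i t) (at t)"
  shows "((\<lambda>x. \<Sum>i<N. \<psi> i (a i \<bullet> x + b i))
           has_derivative (\<lambda>h. (\<Sum>i<N. D i (a i \<bullet> x + b i) *\<^sub>R a i) \<bullet> h)) (at x)"
proof -
  have "((\<lambda>x. \<Sum>i<N. \<psi> i (a i \<bullet> x + b i))
           has_derivative (\<lambda>h. \<Sum>i<N. D i (a i \<bullet> x + b i) * (a i \<bullet> h))) (at x)"
  proof (rule has_derivative_sum)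
    fix i
    assume "i \<in> {..<N}"
    then have "(\<psi> i has_derivative (\<lambda>y. D i (a i \<bullet> x + b i) * y)) (at (a i \<bullet> x + b i))"
      using assms by (simp add: has_field_derivative_def)
    moreover have "((\<lambda>x. a i \<bullet> x + b i) has_derivative (\<lambda>h. a i \<bullet> h)) (at x)"
      by (auto intro!: derivative_eq_intros)
    ultimately show "((\<lambda>x. \<psi> i (a i \<bullet> x + b i)) has_derivative (\<lambda>h. D i (a i \<bullet> x + b i) * (a i \<bullet> h))) (at x)"
      using has_derivative_compose by fastforce
  qed
  then show ?thesis
    by (simp add: inner_sum_left)
qed

lemma continuous_on_grad_net:
  assumes "continuous_on UNIV s"
  shows "continuous_on UNIV (grad_net s M w c u v \<beta>)"
proof -
  have "continuous_on UNIV (\<lambda>x. s (v j * (w j \<bullet> x + c j) + \<beta> j))" for j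
    by (rule continuous_on_compose2[OF assms]) (auto intro!: continuous_intros)
  then show ?thesis
    unfolding grad_net_def[abs_def] by (intro continuous_intros)
qed

lemma grad_net_has_potential:
  assumes "continuous_on UNIV s"
  shows "\<exists>\<Phi>. \<forall>x. (\<Phi> has_derivative (\<lambda>h. grad_net s M w c u v \<beta> x \<bullet> h)) (at x)"
proof -
  have "\<exists>Q. \<forall>t. (Q has_real_derivative s (v j * t + \<beta> j)) (at t)" for j
    by (rule antiderivative_exists, rule continuous_on_compose2[OF assms]) (auto intro!: continuous_intros)
  then obtain Q where Q: "\<And>j t. (Q j has_real_derivative s (v j * t + \<beta> j)) (at t)"
    by metis
  have "((\<lambda>x. \<Sum>j<M. u j * Q j (w j \<bullet> x + c j))
      has_derivative (\<lambda>h. grad_net s M w c u v \<beta> x \<bullet> h)) (at x)" for x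
    unfolding grad_net_def
    by (rule has_derivative_ridge_sum[where \<psi>="\<lambda>j t. u j * Q j t"
          and D="\<lambda>j t. u j * s (v j * t + \<beta> j)"])
      (intro DERIV_cmult Q)
  then show ?thesis
    by blast
qed

lemma grad_net_of_shallow_nets:
  fixes a :: "nat \<Rightarrow> real ^ 'd"
  shows "\<exists>M w c u v \<beta>. M \<ge> 1 \<and>
    (\<forall>x. grad_net s M w c u v \<beta> x = (\<Sum>i<N. shallow_net s (ps i) (a i \<bullet> x + b i) *\<^sub>R a i))"
proof -
  \<comment> \<open>list all neurons with their ridge direction, plus a zero neuron so that M \<ge> 1\<close>
  define L :: "(((real ^ 'd) \<times> real) \<times> real \<times> real \<times> real) list" where
    "L = ((0, 0), (0, 0, 0)) # concat (map (\<lambda>i. map (\<lambda>n. ((a i, b i), n)) (ps i)) [0..<N])"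
  define T where "T x q = (fst (snd q) * s (fst (snd (snd q)) * (fst (fst q) \<bullet> x + snd (fst q))
    + snd (snd (snd q)))) *\<^sub>R fst (fst q)" for x and q :: "((real ^ 'd) \<times> real) \<times> real \<times> real \<times> real"
  have ridge: "(\<Sum>n\<leftarrow>ns. T x ((a', b'), n)) = shallow_net s ns (a' \<bullet> x + b') *\<^sub>R a'"
    for a' b' ns x
    by (induction ns) (auto simp: T_def shallow_net_def scaleR_left_distrib)
  have concat: "(\<Sum>q\<leftarrow>concat (map g [0..<n]). T x q) = (\<Sum>i<n. \<Sum>q\<leftarrow>g i. T x q)" for g n x
    by (induction n) auto
  define w where "w j = fst (fst (L ! j))" for j
  define c where "c j = snd (fst (L ! j))" for j
  define u where "u j = fst (snd (L ! j))" for j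
  define v where "v j = fst (snd (snd (L ! j)))" for j
  define \<beta> where "\<beta> j = snd (snd (snd (L ! j)))" for j
  have "grad_net s (length L) w c u v \<beta> x = (\<Sum>q\<leftarrow>L. T x q)" for x
    by (simp add: grad_net_def T_def w_def c_def u_def v_def \<beta>_def sum_list_sum_nth atLeast0LessThan)
  also have "(\<Sum>q\<leftarrow>L. T x q) = (\<Sum>i<N. shallow_net s (ps i) (a i \<bullet> x + b i) *\<^sub>R a i)" for x
    using ridge by (simp add: L_def concat comp_def T_def[of x "((0, 0), 0, 0, 0)"])
  finally have "grad_net s (length L) w c u v \<beta> x
      = (\<Sum>i<N. shallow_net s (ps i) (a i \<bullet> x + b i) *\<^sub>R a i)" for x .
  moreover have "length L \<ge> 1"
    by (simp add: L_def)
  ultimately show ?thesis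
    by blast
qed

lemma unit_cube_affine_bound:
  fixes a x :: "real ^ 'd"
  assumes "x \<in> unit_cube"
  shows "\<bar>a \<bullet> x + b\<bar> \<le> norm a * CARD('d) + \<bar>b\<bar>"
proof -
  have "norm x \<le> (\<Sum>i\<in>UNIV. \<bar>x $ i\<bar>)"
    by (rule norm_le_l1_cart)
  also have "\<dots> \<le> (\<Sum>i\<in>(UNIV::'d set). 1)"
    using assms by (intro sum_mono) (auto simp: unit_cube_def)
  finally have "norm a * norm x \<le> norm a * CARD('d)"
    by (intro mult_left_mono) auto
  with Cauchy_Schwarz_ineq2[of a x] show ?thesis
    by linarith
qed

lemma grad_net_approximates_ridge_field:
  fixes a :: "nat \<Rightarrow> real ^ 'd"
  assumes s: "continuous_on UNIV s" "\<not> is_polynomial_fun s"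
    and D: "\<And>i. i < N \<Longrightarrow> continuous_on UNIV (D i)" and "e > 0"
  shows "\<exists>M w c u v \<beta>. M \<ge> 1 \<and>
    (\<forall>x\<in>unit_cube. norm ((\<Sum>i<N. D i (a i \<bullet> x + b i) *\<^sub>R a i) - grad_net s M w c u v \<beta> x) \<le> e)"
proof -
  define R where "R i = norm (a i) * CARD('d) + \<bar>b i\<bar>" for i
  define K where "K = (\<Sum>i<N. norm (a i)) + 1"
  have K: "K > 0"
    unfolding K_def by (simp add: add_nonneg_pos sum_nonneg)
  define \<delta> where "\<delta> = e / K"
  have \<delta>: "\<delta> > 0"
    using K \<open>e > 0\<close> by (simp add: \<delta>_def)
  have "\<exists>ns. i < N \<longrightarrow> (\<forall>t\<in>{-R i..R i}. \<bar>D i t - shallow_net s ns t\<bar> < \<delta>)" for i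
    using net_approximable_continuous[OF s D[of i]] \<delta> unfolding net_approximable_def by blast
  then obtain ps where ps: "\<And>i t. i < N \<Longrightarrow> t \<in> {-R i..R i} \<Longrightarrow> \<bar>D i t - shallow_net s (ps i) t\<bar> < \<delta>"
    by metis
  obtain M w c u v \<beta> where "M \<ge> 1" and grad_net_eq:
    "\<And>x. grad_net s M w c u v \<beta> x = (\<Sum>i<N. shallow_net s (ps i) (a i \<bullet> x + b i) *\<^sub>R a i)"
    using grad_net_of_shallow_nets by blast
  have "norm ((\<Sum>i<N. D i (a i \<bullet> x + b i) *\<^sub>R a i) - grad_net s M w c u v \<beta> x) \<le> e"
    if "x \<in> unit_cube" for x
  proof -
    have "\<bar>D i (a i \<bullet> x + b i) - shallow_net s (ps i) (a i \<bullet> x + b i)\<bar> \<le> \<delta>" if "i < N" for i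
    proof -
      have "a i \<bullet> x + b i \<in> {-R i..R i}"
        using unit_cube_affine_bound[OF \<open>x \<in> unit_cube\<close>, of "a i" "b i"] by (simp add: R_def abs_le_iff)
      from ps[OF that this] show ?thesis
        by simp
    qed
    then have "norm (\<Sum>i<N. (D i (a i \<bullet> x + b i) - shallow_net s (ps i) (a i \<bullet> x + b i)) *\<^sub>R a i)
        \<le> (\<Sum>i<N. \<delta> * norm (a i))"
      by (intro order_trans[OF norm_sum sum_mono]) (auto intro: mult_right_mono)
    also have "\<dots> \<le> \<delta> * K"
      using \<delta> by (simp add: K_def sum_distrib_left[symmetric])
    also have "\<dots> = e"
      using K by (simp add: \<delta>_def)
    finally show ?thesis
      by (simp add: grad_net_eq sum_subtractf scaleR_diff_left)
  qed
  with \<open>M \<ge> 1\<close> show ?thesis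
    by blast
qed

theorem theorem3:
  fixes s :: "real \<Rightarrow> real"
    and F :: "real ^ 'd \<Rightarrow> real"
    and gradF :: "real ^ 'd \<Rightarrow> real ^ 'd"
    and N :: nat
    and a :: "nat \<Rightarrow> real ^ 'd"
    and b :: "nat \<Rightarrow> real"
    and \<psi> :: "nat \<Rightarrow> real \<Rightarrow> real"
    and \<epsilon> :: real
  assumes s_cont: "continuous_on UNIV s"
    and s_nonpoly: "\<not> is_polynomial_fun s"
    and N_pos: "N \<ge> 1"
    and psi_C1: "\<And>i. i < N \<Longrightarrow> \<psi> i C1_differentiable_on UNIV"
    and F_def: "\<And>x. F x = (\<Sum>i<N. \<psi> i (a i \<bullet> x + b i))"
    and F_grad: "\<And>x. (F has_derivative (\<lambda>h. gradF x \<bullet> h)) (at x)"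
    and eps_pos: "\<epsilon> > 0"
  shows "\<exists>M w c u v \<beta>. M \<ge> 1 \<and>
           (SUP x\<in>unit_cube. norm (gradF x - grad_net s M w c u v \<beta> x)) < \<epsilon> \<and>
           continuous_on UNIV (grad_net s M w c u v \<beta>) \<and>
           (\<exists>\<Phi> :: real ^ 'd \<Rightarrow> real.
              \<forall>x. (\<Phi> has_derivative (\<lambda>h. grad_net s M w c u v \<beta> x \<bullet> h)) (at x))"
proof -
  have "\<forall>i. \<exists>D. i < N \<longrightarrow> (\<forall>x. (\<psi> i has_real_derivative D x) (at x)) \<and> continuous_on UNIV D"
    using psi_C1 by (simp add: C1_differentiable_on_def has_real_derivative_iff_has_vector_derivative)
  then obtain D where D: "\<And>i x. i < N \<Longrightarrow> (\<psi> i has_real_derivative D i x) (at x)"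
    "\<And>i. i < N \<Longrightarrow> continuous_on UNIV (D i)"
    by metis
  have gradF: "gradF x = (\<Sum>i<N. D i (a i \<bullet> x + b i) *\<^sub>R a i)" for x
  proof -
    have "F = (\<lambda>x. \<Sum>i<N. \<psi> i (a i \<bullet> x + b i))"
      using F_def by blast
    with has_derivative_ridge_sum[where D=D, OF D(1)]
    have "(F has_derivative (\<lambda>h. (\<Sum>i<N. D i (a i \<bullet> x + b i) *\<^sub>R a i) \<bullet> h)) (at x)"
      by simp
    from has_derivative_unique[OF F_grad this] show ?thesis
      by (simp add: fun_eq_iff vector_eq_rdot)
  qed
  obtain M w c u v \<beta> where "M \<ge> 1" and approx:
    "\<forall>x\<in>unit_cube. norm (gradF x - grad_net s M w c u v \<beta> x) \<le> \<epsilon> / 2"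
    using grad_net_approximates_ridge_field[where D=D and N=N and e="\<epsilon> / 2" and a=a and b=b,
      OF s_cont s_nonpoly D(2)] eps_pos
    by (auto simp: gradF)
  have "0 \<in> unit_cube"
    by (simp add: unit_cube_def)
  then have "(SUP x\<in>unit_cube. norm (gradF x - grad_net s M w c u v \<beta> x)) \<le> \<epsilon> / 2"
    using approx by (intro cSUP_least) auto
  with \<open>M \<ge> 1\<close> eps_pos continuous_on_grad_net[OF s_cont] grad_net_has_potential[OF s_cont]
  show ?thesis
    by (intro exI[of _ M] exI[of _ w] exI[of _ c] exI[of _ u] exI[of _ v] exI[of _ \<beta>]) auto
qed

end
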